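(* Let $m\in[1,+\infty)$. There is a constant $C>1$ such that for all $p=(z,t)$, $q=(\zeta,\tau)\in\mathbb R^3$, $$C^{-1}\delta(p,q)\le d(p,q)\le C\,\delta(p,q),$$ where $$\delta((z,t),(\zeta,\tau))=|z-\zeta|+\min\Big\{|v|^{\frac1{2m+2}},\ \frac{|v|^{1/2}}{|z|^m}\Big\},\qquad v=\tau-t+|z|^{2m}\omega(z,\zeta),$$ with $\omega(z,\zeta)=x\eta-y\xi$ for $z=(x,y)$, $\zeta=(\xi,\eta)$, and with the convention $|v|^{1/2}/|z|^m=+\infty$ when $z=0$ and $v\neq 0$ (and $=0$ when $v=0$).
   Context: Write points of $\mathbb R^3=\mathbb C\times\mathbb R$ as $(z,t)=(x,y,t)$. For a real parameter $m\ge1$ consider the vector fields $X=\partial_x+|z|^{2m}y\,\partial_t$ and $Y=\partial_y-|z|^{2m}x\,\partial_t$. An absolutely continuous curve $\gamma:[0,1]\to\mathbb R^3$ is horizontal if $\dot\gamma(s)=\alpha(s)X(\gamma(s))+\beta(s)Y(\gamma(s))$ for a.e. $s$, with length $\int_0^1|(\alpha(s),\beta(s))|\,ds$; the Carnot–Carathéodory distance $d(p,q)$ is the infimum of lengths of horizontal curves joining $p$ to $q$. *)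

theory Defs
  imports "HOL-Analysis.Analysis"
begin

text \<open>Points of R^3 = C x R are triples (x, y, t).\<close>

definition zabs :: "real \<Rightarrow> real \<Rightarrow> real" where
  "zabs x y = sqrt (x\<^sup>2 + y\<^sup>2)"

definition hfield :: "real \<Rightarrow> real \<Rightarrow> real \<Rightarrow> real \<times> real \<times> real \<Rightarrow> real \<times> real \<times> real" where
  "hfield m a b p = (case p of (x, y, t) \<Rightarrow>
      (a, b, (zabs x y) powr (2 * m) * (a * y - b * x)))"

text \<open>Horizontal curve on [0,1] with controls alpha, beta: alpha, beta are integrable
  on [0,1] and gamma is the indefinite integral of alpha X + beta Y along gamma
  (equivalently, gamma is absolutely continuous with the prescribed a.e. derivative).\<close>
definition horizontal ::
  "real \<Rightarrow> (real \<Rightarrow> real \<times> real \<times> real) \<Rightarrow> (real \<Rightarrow> real) \<Rightarrow> (real \<Rightarrow> real) \<Rightarrow> bool" where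
  "horizontal m \<gamma> a b \<longleftrightarrow>
     a absolutely_integrable_on {0..1} \<and> b absolutely_integrable_on {0..1} \<and>
     (\<forall>s\<in>{0..1}. ((\<lambda>r. hfield m (a r) (b r) (\<gamma> r)) has_integral (\<gamma> s - \<gamma> 0)) {0..s})"

definition hlength :: "(real \<Rightarrow> real) \<Rightarrow> (real \<Rightarrow> real) \<Rightarrow> real" where
  "hlength a b = integral {0..1} (\<lambda>s. sqrt ((a s)\<^sup>2 + (b s)\<^sup>2))"

definition cc_dist :: "real \<Rightarrow> real \<times> real \<times> real \<Rightarrow> real \<times> real \<times> real \<Rightarrow> real" where
  "cc_dist m p q = Inf {hlength a b | \<gamma> a b. horizontal m \<gamma> a b \<and> \<gamma> 0 = p \<and> \<gamma> 1 = q}"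

definition omega :: "real \<times> real \<Rightarrow> real \<times> real \<Rightarrow> real" where
  "omega z w = fst z * snd w - snd z * fst w"

text \<open>The quasi-distance delta; for z = 0 the second term of the min is +infinity
  (or 0 when v = 0, in which case the first term is 0 too).\<close>
definition delta :: "real \<Rightarrow> real \<times> real \<times> real \<Rightarrow> real \<times> real \<times> real \<Rightarrow> real" where
  "delta m p q = (case p of (x, y, t) \<Rightarrow> case q of (\<xi>, \<eta>, \<tau>) \<Rightarrow>
     (let v = \<tau> - t + (zabs x y) powr (2 * m) * omega (x, y) (\<xi>, \<eta>) in
      zabs (x - \<xi>) (y - \<eta>) +
      (if zabs x y = 0 then \<bar>v\<bar> powr (1 / (2 * m + 2))
       else min (\<bar>v\<bar> powr (1 / (2 * m + 2))) (sqrt \<bar>v\<bar> / (zabs x y) powr m))))"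

end

theory Submission
  imports Defs
begin

(* Along a horizontal curve of length L from (z,t) to (\<zeta>,\<tau>) the planar part moves by at most L,
   and comparing the height integrand with the one frozen at z shows
   |v| \<le> (2m+1) (|z| + L)^(2m) L^2; both terms of delta are therefore O(L).
   Conversely, lift the planar segment from z to \<zeta> and then correct the remaining height defect u
   above \<zeta>: by a large circle, of length O(|u|^(1/(2m+2))), when |\<zeta>| is small, and otherwise by
   a thin annular sector at radius |\<zeta>|, of length O(|u|^(1/2) / |\<zeta>|^m). The lifted segment is
   itself a horizontal curve of length |z - \<zeta>|, so its height drift obeys the first estimate,
   which makes u comparable to v. *)

section \<open>Horizontal curves\<close>

lemma zabs_eq_norm: "zabs x y = norm (x, y)"
  by (simp add: zabs_def norm_Pair)

lemma hfield_eq: "hfield m a b (x, y, t) = (a, b, norm (x, y) powr (2 * m) * omega (a, b) (x, y))"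
  by (simp add: hfield_def zabs_eq_norm omega_def)

lemma hfield_scaleR: "hfield m (c * a) (c * b) p = c *\<^sub>R hfield m a b p"
  by (cases p) (simp add: hfield_def algebra_simps)

lemma abs_omega_le_norm_mult: "\<bar>omega z w\<bar> \<le> norm z * norm w"
proof -
  obtain a b x y where zw: "z = (a, b)" "w = (x, y)"
    by (cases z, cases w) auto
  have "(a\<^sup>2 + b\<^sup>2) * (x\<^sup>2 + y\<^sup>2) = (a * y - b * x)\<^sup>2 + (a * x + b * y)\<^sup>2"
    by algebra
  then have "sqrt ((a * y - b * x)\<^sup>2) \<le> sqrt ((a\<^sup>2 + b\<^sup>2) * (x\<^sup>2 + y\<^sup>2))"
    by (intro real_sqrt_le_mono) simp
  then have "\<bar>a * y - b * x\<bar> \<le> norm (a, b) * norm (x, y)"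
    by (simp add: norm_Pair real_sqrt_mult)
  then show ?thesis
    using zw by (simp add: omega_def)
qed

lemma has_integral_Pair:
  assumes "(f has_integral i) S" "(g has_integral j) S"
  shows "((\<lambda>x. (f x, g x)) has_integral (i, j)) S"
proof -
  have 1: "((\<lambda>x. (f x, 0::'c)) has_integral (i, 0)) S"
    using has_integral_linear[OF assms(1), of "\<lambda>a. (a, 0::'c)"]
    by (simp add: o_def bounded_linear_Pair bounded_linear_ident bounded_linear_zero)
  have 2: "((\<lambda>x. (0::'b, g x)) has_integral (0, j)) S"
    using has_integral_linear[OF assms(2), of "\<lambda>a. (0::'b, a)"]
    by (simp add: o_def bounded_linear_Pair bounded_linear_ident bounded_linear_zero)
  show ?thesis
    using has_integral_add[OF 1 2] by simp
qed

lemma has_integral_fst: "(f has_integral i) S \<Longrightarrow> ((\<lambda>x. fst (f x)) has_integral fst i) S"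
  using has_integral_linear[of f i S fst] by (simp add: o_def bounded_linear_fst)

lemma has_integral_snd: "(f has_integral i) S \<Longrightarrow> ((\<lambda>x. snd (f x)) has_integral snd i) S"
  using has_integral_linear[of f i S snd] by (simp add: o_def bounded_linear_snd)

lemma absolutely_integrable_Pair:
  fixes a b :: "real \<Rightarrow> real"
  assumes "a absolutely_integrable_on S" "b absolutely_integrable_on S"
  shows "(\<lambda>r. (a r, b r)) absolutely_integrable_on S"
proof (rule absolutely_integrable_integrable_bound[where g="\<lambda>r. \<bar>a r\<bar> + \<bar>b r\<bar>"])
  show "norm (a r, b r) \<le> \<bar>a r\<bar> + \<bar>b r\<bar>" for r
    using norm_Pair_le[of "a r" "b r"] by simp
  have "a integrable_on S" "b integrable_on S"
    using assms by (auto simp: absolutely_integrable_on_def)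
  then show "(\<lambda>r. (a r, b r)) integrable_on S"
    using has_integral_Pair by (metis has_integral_integrable_integral)
  have "(\<lambda>r. norm (a r)) integrable_on S" "(\<lambda>r. norm (b r)) integrable_on S"
    using assms by (auto simp: absolutely_integrable_on_def)
  then show "(\<lambda>r. \<bar>a r\<bar> + \<bar>b r\<bar>) integrable_on S"
    by (auto intro: integrable_add)
qed

lemma integrable_speed:
  fixes a b :: "real \<Rightarrow> real"
  assumes "a absolutely_integrable_on S" "b absolutely_integrable_on S"
  shows "(\<lambda>r. sqrt ((a r)\<^sup>2 + (b r)\<^sup>2)) integrable_on S"
  using absolutely_integrable_Pair[OF assms]
  by (simp add: absolutely_integrable_on_def norm_Pair)

lemma hlength_nonneg:
  assumes "horizontal m \<gamma> a b"
  shows "0 \<le> hlength a b"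
proof -
  have "(\<lambda>s. sqrt ((a s)\<^sup>2 + (b s)\<^sup>2)) integrable_on {0..1}"
    using assms integrable_speed unfolding horizontal_def by blast
  then show ?thesis
    unfolding hlength_def by (rule integral_nonneg) simp
qed

(* The concatenation f +++ g traverses each piece in half the time, hence at twice its speed. *)

lemma has_integral_joinpaths_first:
  fixes f g :: "real \<Rightarrow> 'a::banach"
  assumes "(f has_integral I) {0..t}" "0 \<le> t" "t \<le> 1"
  shows "((\<lambda>s. 2 *\<^sub>R (f +++ g) s) has_integral I) {0..t/2}"
proof -
  have "((\<lambda>x. f (2 *\<^sub>R x + 0)) has_integral I /\<^sub>R 2 ^ DIM(real)) (cbox ((0 - 0) /\<^sub>R 2) ((t - 0) /\<^sub>R 2))"
    using has_integral_affinity'[of f I 0 t 2 0] assms by simp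
  then have "((\<lambda>x. f (2 * x)) has_integral I /\<^sub>R 2) {0..t/2}"
    by simp
  from has_integral_cmul[OF this, of 2]
  have h: "((\<lambda>r. 2 *\<^sub>R f (2 * r)) has_integral I) {0..t/2}"
    by simp
  show ?thesis
    by (rule has_integral_spike_finite[where S="{}", OF _ _ h]) (use assms in \<open>auto simp: joinpaths_def\<close>)
qed

lemma has_integral_joinpaths:
  fixes f g :: "real \<Rightarrow> 'a::banach"
  assumes "(f has_integral I) {0..1}" "(g has_integral J) {0..t}" "0 \<le> t" "t \<le> 1"
  shows "((\<lambda>s. 2 *\<^sub>R (f +++ g) s) has_integral (I + J)) {0..(t+1)/2}"
proof -
  have "((\<lambda>x. g (2 *\<^sub>R x + (-1))) has_integral J /\<^sub>R 2 ^ DIM(real))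
          (cbox ((0 - (-1)) /\<^sub>R 2) ((t - (-1)) /\<^sub>R 2))"
    using has_integral_affinity'[of g J 0 t 2 "-1"] assms by simp
  then have "((\<lambda>x. g (2 * x - 1)) has_integral J /\<^sub>R 2) {1/2..(t+1)/2}"
    by (simp add: add.commute)
  from has_integral_cmul[OF this, of 2]
  have h: "((\<lambda>r. 2 *\<^sub>R g (2 * r - 1)) has_integral J) {1/2..(t+1)/2}"
    by simp
  have "((\<lambda>s. 2 *\<^sub>R (f +++ g) s) has_integral J) {1/2..(t+1)/2}"
    by (rule has_integral_spike_finite[where S="{1/2}", OF _ _ h]) (auto simp: joinpaths_def)
  moreover have "((\<lambda>s. 2 *\<^sub>R (f +++ g) s) has_integral I) {0..1/2}"
    using has_integral_joinpaths_first[OF assms(1)] by simp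
  ultimately show ?thesis
    using has_integral_combine[of 0 "1/2" "(t+1)/2"] assms by (simp add: add.commute)
qed

lemma integrable_joinpaths:
  fixes f g :: "real \<Rightarrow> 'a::banach"
  assumes "f integrable_on {0..1}" "g integrable_on {0..1}"
  shows "(\<lambda>s. 2 *\<^sub>R (f +++ g) s) integrable_on {0..1}"
  using has_integral_joinpaths[of f _ g _ 1] assms by (auto simp: integrable_on_def)

lemma absolutely_integrable_joinpaths:
  fixes f g :: "real \<Rightarrow> real"
  assumes "f absolutely_integrable_on {0..1}" "g absolutely_integrable_on {0..1}"
  shows "(\<lambda>s. 2 * (f +++ g) s) absolutely_integrable_on {0..1}"
proof -
  have "f integrable_on {0..1}" "g integrable_on {0..1}"
    "(\<lambda>r. norm (f r)) integrable_on {0..1}" "(\<lambda>r. norm (g r)) integrable_on {0..1}"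
    using assms by (simp_all add: absolutely_integrable_on_def)
  then have "(\<lambda>s. 2 *\<^sub>R (f +++ g) s) integrable_on {0..1}"
    "(\<lambda>s. 2 *\<^sub>R ((\<lambda>r. norm (f r)) +++ (\<lambda>r. norm (g r))) s) integrable_on {0..1}"
    by (simp_all only: integrable_joinpaths)
  moreover have "norm (2 *\<^sub>R (f +++ g) s) = 2 *\<^sub>R ((\<lambda>r. norm (f r)) +++ (\<lambda>r. norm (g r))) s" for s
    by (simp add: joinpaths_def abs_mult)
  ultimately show ?thesis by (simp add: absolutely_integrable_on_def)
qed

definition horizontally_joinable ::
  "real \<Rightarrow> real \<times> real \<times> real \<Rightarrow> real \<times> real \<times> real \<Rightarrow> real \<Rightarrow> bool" where
  "horizontally_joinable m p q l \<longleftrightarrow>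
     (\<exists>\<gamma> a b. horizontal m \<gamma> a b \<and> \<gamma> 0 = p \<and> \<gamma> 1 = q \<and> hlength a b \<le> l)"

lemma horizontally_joinable_refl: "horizontally_joinable m p p 0"
proof -
  have "(\<lambda>r::real. (0::real, 0::real, 0::real)) = (\<lambda>r. 0)"
    by (simp add: zero_prod_def)
  then have "horizontal m (\<lambda>s. p) (\<lambda>s. 0) (\<lambda>s. 0)"
    unfolding horizontal_def by (cases p) (auto simp: hfield_def)
  moreover have "hlength (\<lambda>s. 0) (\<lambda>s. 0) = 0"
    by (simp add: hlength_def)
  ultimately show ?thesis
    unfolding horizontally_joinable_def by fastforce
qed

lemma horizontally_joinable_mono:
  "horizontally_joinable m p q l \<Longrightarrow> l \<le> l' \<Longrightarrow> horizontally_joinable m p q l'"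
  unfolding horizontally_joinable_def by force

lemma horizontal_joinpaths:
  assumes h1: "horizontal m \<gamma>1 a1 b1" and h2: "horizontal m \<gamma>2 a2 b2" and "\<gamma>1 1 = \<gamma>2 0"
  shows "horizontal m (\<gamma>1 +++ \<gamma>2) (\<lambda>s. 2 * (a1 +++ a2) s) (\<lambda>s. 2 * (b1 +++ b2) s)"
proof -
  define F1 where "F1 r = hfield m (a1 r) (b1 r) (\<gamma>1 r)" for r
  define F2 where "F2 r = hfield m (a2 r) (b2 r) (\<gamma>2 r)" for r
  have F1: "(F1 has_integral \<gamma>1 s - \<gamma>1 0) {0..s}" if "s \<in> {0..1}" for s
    using h1 that unfolding horizontal_def F1_def by blast
  have F2: "(F2 has_integral \<gamma>2 s - \<gamma>2 0) {0..s}" if "s \<in> {0..1}" for s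
    using h2 that unfolding horizontal_def F2_def by blast
  have F: "hfield m (2 * (a1 +++ a2) s) (2 * (b1 +++ b2) s) ((\<gamma>1 +++ \<gamma>2) s) = 2 *\<^sub>R (F1 +++ F2) s" for s
    by (simp add: joinpaths_def F1_def F2_def hfield_scaleR)
  show ?thesis
    unfolding horizontal_def F
  proof (intro conjI ballI)
    show "(\<lambda>s. 2 * (a1 +++ a2) s) absolutely_integrable_on {0..1}"
      "(\<lambda>s. 2 * (b1 +++ b2) s) absolutely_integrable_on {0..1}"
      using h1 h2 unfolding horizontal_def by (blast intro: absolutely_integrable_joinpaths)+
    fix s :: real
    assume s: "s \<in> {0..1}"
    show "((\<lambda>r. 2 *\<^sub>R (F1 +++ F2) r) has_integral (\<gamma>1 +++ \<gamma>2) s - (\<gamma>1 +++ \<gamma>2) 0) {0..s}"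
    proof (cases "s \<le> 1/2")
      case True
      then show ?thesis
        using has_integral_joinpaths_first[OF F1[of "2 * s"], of F2] s
        by (simp add: joinpaths_def)
    next
      case False
      then show ?thesis
        using has_integral_joinpaths[OF F1[of 1] F2[of "2 * s - 1"]] s assms(3)
        by (simp add: joinpaths_def)
    qed
  qed
qed

lemma hlength_joinpaths:
  assumes "horizontal m \<gamma>1 a1 b1" "horizontal m \<gamma>2 a2 b2"
  shows "hlength (\<lambda>s. 2 * (a1 +++ a2) s) (\<lambda>s. 2 * (b1 +++ b2) s) = hlength a1 b1 + hlength a2 b2"
proof -
  define v1 where "v1 r = sqrt ((a1 r)\<^sup>2 + (b1 r)\<^sup>2)" for r
  define v2 where "v2 r = sqrt ((a2 r)\<^sup>2 + (b2 r)\<^sup>2)" for r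
  have i1: "(v1 has_integral hlength a1 b1) {0..1}" and i2: "(v2 has_integral hlength a2 b2) {0..1}"
    using assms integrable_speed unfolding horizontal_def hlength_def v1_def v2_def by blast+
  have "((\<lambda>s. 2 *\<^sub>R (v1 +++ v2) s) has_integral hlength a1 b1 + hlength a2 b2) {0..(1+1)/2}"
    using has_integral_joinpaths[OF i1 i2] by simp
  then have int: "((\<lambda>s. 2 *\<^sub>R (v1 +++ v2) s) has_integral hlength a1 b1 + hlength a2 b2) {0..1}"
    by simp
  have "sqrt ((2 * x)\<^sup>2 + (2 * y)\<^sup>2) = sqrt (2\<^sup>2 * (x\<^sup>2 + y\<^sup>2))" for x y :: real
    by (simp add: algebra_simps)
  then have "sqrt ((2 * x)\<^sup>2 + (2 * y)\<^sup>2) = 2 * sqrt (x\<^sup>2 + y\<^sup>2)" for x y :: real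
    by (simp only: real_sqrt_mult) simp
  then have "(\<lambda>s. sqrt ((2 * (a1 +++ a2) s)\<^sup>2 + (2 * (b1 +++ b2) s)\<^sup>2)) = (\<lambda>s. 2 *\<^sub>R (v1 +++ v2) s)"
    by (auto simp: joinpaths_def v1_def v2_def)
  then have "hlength (\<lambda>s. 2 * (a1 +++ a2) s) (\<lambda>s. 2 * (b1 +++ b2) s) = integral {0..1} (\<lambda>s. 2 *\<^sub>R (v1 +++ v2) s)"
    unfolding hlength_def by (rule arg_cong)
  also have "\<dots> = hlength a1 b1 + hlength a2 b2"
    using int by (rule integral_unique)
  finally show ?thesis .
qed

lemma horizontally_joinable_trans:
  assumes "horizontally_joinable m p q l1" "horizontally_joinable m q r l2"
  shows "horizontally_joinable m p r (l1 + l2)"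
proof -
  obtain \<gamma>1 a1 b1 where h1: "horizontal m \<gamma>1 a1 b1" "\<gamma>1 0 = p" "\<gamma>1 1 = q" "hlength a1 b1 \<le> l1"
    using assms(1) by (auto simp: horizontally_joinable_def)
  obtain \<gamma>2 a2 b2 where h2: "horizontal m \<gamma>2 a2 b2" "\<gamma>2 0 = q" "\<gamma>2 1 = r" "hlength a2 b2 \<le> l2"
    using assms(2) by (auto simp: horizontally_joinable_def)
  show ?thesis
    unfolding horizontally_joinable_def
    using horizontal_joinpaths[OF h1(1) h2(1)] hlength_joinpaths[OF h1(1) h2(1)] h1 h2
    by (intro exI[of _ "\<gamma>1 +++ \<gamma>2"] exI[of _ "\<lambda>s. 2 * (a1 +++ a2) s"] exI[of _ "\<lambda>s. 2 * (b1 +++ b2) s"])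
      (auto simp: joinpaths_def)
qed

lemma cc_dist_le_if_joinable:
  assumes "horizontally_joinable m p q l"
  shows "cc_dist m p q \<le> l"
proof -
  obtain \<gamma> a b where h: "horizontal m \<gamma> a b" "\<gamma> 0 = p" "\<gamma> 1 = q" "hlength a b \<le> l"
    using assms by (auto simp: horizontally_joinable_def)
  have "cc_dist m p q \<le> hlength a b"
    unfolding cc_dist_def using h hlength_nonneg
    by (intro cInf_lower bdd_belowI[of _ 0]) blast+
  with h(4) show ?thesis by simp
qed

section \<open>Lower bounds along horizontal curves\<close>

definition vertical_drift_bound :: "real \<Rightarrow> real \<Rightarrow> real \<Rightarrow> real" where
  "vertical_drift_bound m r l = (2*m+1) * (r + l) powr (2*m) * l\<^sup>2"

lemma vertical_drift_bound_mono:
  assumes "0 \<le> m" "0 \<le> r" "0 \<le> l" "l \<le> l'"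
  shows "vertical_drift_bound m r l \<le> vertical_drift_bound m r l'"
proof -
  have "(r + l) powr (2*m) \<le> (r + l') powr (2*m)" "l\<^sup>2 \<le> l'\<^sup>2"
    using assms by (auto intro: powr_mono2 power_mono)
  then have "(r + l) powr (2*m) * l\<^sup>2 \<le> (r + l') powr (2*m) * l'\<^sup>2"
    by (intro mult_mono) auto
  then show ?thesis
    using assms by (simp add: vertical_drift_bound_def mult.assoc mult_left_mono)
qed

lemma vertical_drift_bound_le_length:
  assumes "0 \<le> m" "0 \<le> r" "0 \<le> l" "0 \<le> k" "r \<le> k * l"
  shows "vertical_drift_bound m r l \<le> (2*m+1) * (1+k) powr (2*m) * l powr (2*m+2)"
proof -
  note l = \<open>0 \<le> l\<close>
  have "(r + l) powr (2*m) \<le> ((1+k) * l) powr (2*m)"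
    using assms by (intro powr_mono2) (auto simp: algebra_simps)
  also have "\<dots> = (1+k) powr (2*m) * l powr (2*m)"
    using assms l by (simp add: powr_mult)
  finally have "vertical_drift_bound m r l \<le> (2*m+1) * ((1+k) powr (2*m) * l powr (2*m)) * l\<^sup>2"
    using assms unfolding vertical_drift_bound_def by (intro mult_right_mono mult_left_mono) auto
  also have "\<dots> = (2*m+1) * (1+k) powr (2*m) * (l powr (2*m) * l powr 2)"
    using l by (simp add: mult.assoc)
  also have "l powr (2*m) * l powr 2 = l powr (2*m+2)"
    by (simp add: powr_add)
  finally show ?thesis .
qed

lemma vertical_drift_bound_le_radius:
  assumes "0 \<le> m" "0 \<le> r" "0 \<le> l" "l \<le> k * r"
  shows "vertical_drift_bound m r l \<le> (2*m+1) * (1+k) powr (2*m) * (r powr m)\<^sup>2 * l\<^sup>2"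
proof -
  have "(r + l) powr (2*m) \<le> ((1+k) * r) powr (2*m)"
    using assms by (intro powr_mono2) (auto simp: algebra_simps)
  also have "\<dots> = (1+k) powr (2*m) * (r powr m)\<^sup>2"
    using assms by (simp add: powr_mult power2_eq_square flip: powr_add)
  finally show ?thesis
    using assms unfolding vertical_drift_bound_def
    by (intro mult_right_mono) (auto simp: mult.assoc intro: mult_left_mono)
qed

lemma abs_powr_diff_le:
  fixes x y p M :: real
  assumes p: "1 \<le> p" and "0 \<le> x" "0 \<le> y" "x \<le> M" "y \<le> M"
  shows "\<bar>y powr p - x powr p\<bar> \<le> p * M powr (p - 1) * \<bar>y - x\<bar>"
  using assms(2-)
proof (induction x y rule: linorder_wlog)
  case (le x y)
  show ?case
  proof (cases "x = y")
    case False
    with le have xy: "x < y" by simp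
    have "continuous_on {x..y} (\<lambda>u. u powr p)"
      using p le by (intro continuous_on_powr') (auto intro: continuous_intros)
    moreover have "(\<lambda>u. u powr p) differentiable (at z)" if "x < z" "z < y" for z
      using has_real_derivative_powr[of z p] that le real_differentiable_def by fastforce
    ultimately obtain l z where z: "x < z" "z < y" "DERIV (\<lambda>u. u powr p) z :> l"
        "y powr p - x powr p = (y - x) * l"
      using MVT[OF xy] by blast
    have "l = p * z powr (p - 1)"
      using DERIV_unique[OF z(3) has_real_derivative_powr[of z p]] z le by simp
    moreover have "z powr (p - 1) \<le> M powr (p - 1)"
      using z le p by (intro powr_mono2) auto
    ultimately have "0 \<le> l" "l \<le> p * M powr (p - 1)"
      using p by (auto intro: mult_left_mono)
    then show ?thesis
      using z(4) xy by (simp add: mult_left_mono mult.commute)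
  qed simp
next
  case (sym x y)
  then show ?case by (simp add: abs_minus_commute)
qed

lemma abs_norm_powr_diff_le:
  fixes z z0 :: "'a::real_normed_vector"
  assumes p: "1 \<le> p" and L: "norm (z - z0) \<le> L"
  shows "\<bar>norm z powr p - norm z0 powr p\<bar> \<le> p * (norm z0 + L) powr (p - 1) * L"
proof -
  have L0: "0 \<le> L"
    using L norm_ge_zero order.trans by blast
  have "norm z \<le> norm z0 + L"
    using norm_triangle_ineq[of z0 "z - z0"] L by simp
  then have "\<bar>norm z powr p - norm z0 powr p\<bar> \<le> p * (norm z0 + L) powr (p - 1) * \<bar>norm z - norm z0\<bar>"
    using p L0 by (intro abs_powr_diff_le) auto
  also have "\<dots> \<le> p * (norm z0 + L) powr (p - 1) * L"
    using norm_triangle_ineq3[of z z0] L p by (intro mult_left_mono) auto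
  finally show ?thesis .
qed

lemma abs_vertical_integrand_diff_le:
  fixes z z0 c :: "real \<times> real"
  assumes m: "1 \<le> 2 * m" and L: "norm (z - z0) \<le> L"
  shows "\<bar>norm z powr (2*m) * omega c z - norm z0 powr (2*m) * omega c z0\<bar>
         \<le> (2*m+1) * (norm z0 + L) powr (2*m) * L * norm c"
proof -
  define M where "M = norm z0 + L"
  have L0: "0 \<le> L"
    using L norm_ge_zero order.trans by blast
  have "\<bar>norm z powr (2*m) - norm z0 powr (2*m)\<bar> \<le> 2*m * M powr (2*m - 1) * L"
    unfolding M_def by (rule abs_norm_powr_diff_le[OF m L])
  moreover have "norm z \<le> M"
    using norm_triangle_ineq[of z0 "z - z0"] L by (simp add: M_def)
  then have "\<bar>omega c z\<bar> \<le> norm c * M"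
    using abs_omega_le_norm_mult[of c z] by (meson order.trans mult_left_mono norm_ge_zero)
  ultimately have "\<bar>(norm z powr (2*m) - norm z0 powr (2*m)) * omega c z\<bar>
      \<le> (2*m * M powr (2*m - 1) * L) * (norm c * M)"
    unfolding abs_mult using L0 m by (intro mult_mono) auto
  also have "\<dots> = 2*m * (M * M powr (2*m - 1)) * L * norm c"
    by (simp add: algebra_simps)
  also have "M * M powr (2*m - 1) = M powr (2*m)"
    using L0 by (simp add: M_def powr_mult_base)
  finally have t1: "\<bar>(norm z powr (2*m) - norm z0 powr (2*m)) * omega c z\<bar> \<le> 2*m * M powr (2*m) * L * norm c" .
  have "norm z0 powr (2*m) \<le> M powr (2*m)"
    using L0 m by (auto simp: M_def intro!: powr_mono2)
  moreover have "\<bar>omega c (z - z0)\<bar> \<le> L * norm c"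
    using abs_omega_le_norm_mult[of c "z - z0"] mult_left_mono[OF L, of "norm c"]
    by (simp add: mult.commute)
  ultimately have t2: "\<bar>norm z0 powr (2*m) * omega c (z - z0)\<bar> \<le> M powr (2*m) * L * norm c"
    unfolding abs_mult mult.assoc by (intro mult_mono) auto
  have "norm z powr (2*m) * omega c z - norm z0 powr (2*m) * omega c z0
      = (norm z powr (2*m) - norm z0 powr (2*m)) * omega c z + norm z0 powr (2*m) * omega c (z - z0)"
    by (simp add: omega_def algebra_simps)
  then have "\<bar>norm z powr (2*m) * omega c z - norm z0 powr (2*m) * omega c z0\<bar>
      \<le> 2*m * M powr (2*m) * L * norm c + M powr (2*m) * L * norm c"
    using t1 t2 abs_triangle_ineq by (smt (verit))
  also have "\<dots> = (2*m+1) * M powr (2*m) * L * norm c"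
    by (simp add: algebra_simps)
  finally show ?thesis
    unfolding M_def .
qed

lemma horizontal_has_integral_components:
  assumes "horizontal m \<gamma> a b" "s \<in> {0..1}"
  shows "(a has_integral fst (\<gamma> s) - fst (\<gamma> 0)) {0..s}"
    and "(b has_integral fst (snd (\<gamma> s)) - fst (snd (\<gamma> 0))) {0..s}"
    and "((\<lambda>r. norm (fst (\<gamma> r), fst (snd (\<gamma> r))) powr (2*m) * omega (a r, b r) (fst (\<gamma> r), fst (snd (\<gamma> r))))
           has_integral snd (snd (\<gamma> s)) - snd (snd (\<gamma> 0))) {0..s}"
proof -
  have "hfield m (a r) (b r) (\<gamma> r) = (a r, b r,
          norm (fst (\<gamma> r), fst (snd (\<gamma> r))) powr (2*m) * omega (a r, b r) (fst (\<gamma> r), fst (snd (\<gamma> r))))" for r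
    by (cases "\<gamma> r") (simp add: hfield_eq)
  moreover have "((\<lambda>r. hfield m (a r) (b r) (\<gamma> r)) has_integral \<gamma> s - \<gamma> 0) {0..s}"
    using assms unfolding horizontal_def by blast
  ultimately have int: "((\<lambda>r. (a r, b r,
          norm (fst (\<gamma> r), fst (snd (\<gamma> r))) powr (2*m) * omega (a r, b r) (fst (\<gamma> r), fst (snd (\<gamma> r)))))
        has_integral \<gamma> s - \<gamma> 0) {0..s}"
    by simp
  show "(a has_integral fst (\<gamma> s) - fst (\<gamma> 0)) {0..s}"
    using has_integral_fst[OF int] by simp
  show "(b has_integral fst (snd (\<gamma> s)) - fst (snd (\<gamma> 0))) {0..s}"
    using has_integral_fst[OF has_integral_snd[OF int]] by simp
  show "((\<lambda>r. norm (fst (\<gamma> r), fst (snd (\<gamma> r))) powr (2*m) * omega (a r, b r) (fst (\<gamma> r), fst (snd (\<gamma> r))))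
           has_integral snd (snd (\<gamma> s)) - snd (snd (\<gamma> 0))) {0..s}"
    using has_integral_snd[OF has_integral_snd[OF int]] by simp
qed

lemma horizontal_planar_displacement_le:
  assumes h: "horizontal m \<gamma> a b" and s: "s \<in> {0..1}"
  shows "norm ((fst (\<gamma> s), fst (snd (\<gamma> s))) - (fst (\<gamma> 0), fst (snd (\<gamma> 0)))) \<le> hlength a b"
proof -
  have speed: "(\<lambda>r. norm (a r, b r)) integrable_on {0..1}"
    using h integrable_speed unfolding horizontal_def by (simp add: norm_Pair)
  have int: "((\<lambda>r. (a r, b r)) has_integral
          (fst (\<gamma> s), fst (snd (\<gamma> s))) - (fst (\<gamma> 0), fst (snd (\<gamma> 0)))) {0..s}"
    using has_integral_Pair[OF horizontal_has_integral_components(1,2)[OF h s]] by simp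
  moreover have "(\<lambda>r. norm (a r, b r)) integrable_on {0..s}"
    using s by (intro integrable_subinterval_real[OF speed]) auto
  ultimately have "norm (integral {0..s} (\<lambda>r. (a r, b r))) \<le> integral {0..s} (\<lambda>r. norm (a r, b r))"
    by (intro integral_norm_bound_integral) auto
  then have "norm ((fst (\<gamma> s), fst (snd (\<gamma> s))) - (fst (\<gamma> 0), fst (snd (\<gamma> 0))))
      \<le> integral {0..s} (\<lambda>r. norm (a r, b r))"
    using int by (simp add: integral_unique)
  also have "\<dots> \<le> integral {0..1} (\<lambda>r. norm (a r, b r))"
    using s speed by (intro integral_subset_le integrable_subinterval_real[OF speed]) auto
  finally show ?thesis
    by (simp add: hlength_def norm_Pair)
qed

lemma horizontal_vertical_drift_le:
  assumes m: "1 \<le> 2 * m" and h: "horizontal m \<gamma> a b"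
    and \<gamma>0: "\<gamma> 0 = (x0, y0, t0)" and \<gamma>1: "\<gamma> 1 = (\<xi>, \<eta>, \<tau>)"
  shows "\<bar>\<tau> - t0 + norm (x0, y0) powr (2*m) * omega (x0, y0) (\<xi>, \<eta>)\<bar>
           \<le> vertical_drift_bound m (norm (x0, y0)) (hlength a b)"
proof -
  define z where "z r = (fst (\<gamma> r), fst (snd (\<gamma> r)))" for r
  define L where "L = hlength a b"
  define K where "K = (2*m+1) * (norm (x0, y0) + L) powr (2*m) * L"
  define G where "G r = norm (z r) powr (2*m) * omega (a r, b r) (z r)
                        - norm (x0, y0) powr (2*m) * omega (a r, b r) (x0, y0)" for r
  have i1: "((\<lambda>r. norm (z r) powr (2*m) * omega (a r, b r) (z r)) has_integral \<tau> - t0) {0..1}"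
    using horizontal_has_integral_components(3)[OF h, of 1] \<gamma>0 \<gamma>1 by (simp add: z_def)
  have "(a has_integral \<xi> - x0) {0..1}" "(b has_integral \<eta> - y0) {0..1}"
    using horizontal_has_integral_components(1,2)[OF h, of 1] \<gamma>0 \<gamma>1 by simp_all
  then have i2: "((\<lambda>r. omega (a r, b r) (x0, y0)) has_integral (\<xi> - x0) * y0 - (\<eta> - y0) * x0) {0..1}"
    unfolding omega_def fst_conv snd_conv by (intro has_integral_diff has_integral_mult_left)
  have "(G has_integral (\<tau> - t0) - norm (x0, y0) powr (2*m) * ((\<xi> - x0) * y0 - (\<eta> - y0) * x0)) {0..1}"
    unfolding G_def by (rule has_integral_diff[OF i1 has_integral_mult_right[OF i2]])
  moreover have "(\<tau> - t0) - norm (x0, y0) powr (2*m) * ((\<xi> - x0) * y0 - (\<eta> - y0) * x0)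
      = \<tau> - t0 + norm (x0, y0) powr (2*m) * omega (x0, y0) (\<xi>, \<eta>)"
    by (simp add: omega_def algebra_simps)
  ultimately have int: "(G has_integral \<tau> - t0 + norm (x0, y0) powr (2*m) * omega (x0, y0) (\<xi>, \<eta>)) {0..1}"
    by simp
  have "\<bar>G r\<bar> \<le> K * norm (a r, b r)" if r: "r \<in> {0..1}" for r
  proof -
    have "norm (z r - (x0, y0)) \<le> L"
      using horizontal_planar_displacement_le[OF h r] \<gamma>0 by (simp add: z_def L_def)
    from abs_vertical_integrand_diff_le[OF m this, of "(a r, b r)"]
    show ?thesis
      by (simp add: G_def K_def)
  qed
  moreover have "(\<lambda>r. norm (a r, b r)) integrable_on {0..1}"
    using h integrable_speed unfolding horizontal_def by (simp add: norm_Pair)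
  then have "(\<lambda>r. K * norm (a r, b r)) integrable_on {0..1}"
    by (rule integrable_on_mult_right)
  ultimately have "norm (integral {0..1} G) \<le> integral {0..1} (\<lambda>r. K * norm (a r, b r))"
    using int by (intro integral_norm_bound_integral) auto
  also have "\<dots> = K * L"
    by (simp add: L_def hlength_def norm_Pair)
  finally show ?thesis
    using int by (simp add: integral_unique K_def L_def vertical_drift_bound_def power2_eq_square mult.assoc)
qed

section \<open>The vertical gauge\<close>

lemma powr_le_self:
  fixes c e :: real
  assumes "1 \<le> c" "0 \<le> e" "e \<le> 1"
  shows "c powr e \<le> c"
  using powr_mono[of e 1 c] assms by simp

lemma le_root_of_powr_le:
  fixes x y n :: real
  assumes "0 < n" "0 \<le> x" "x powr n \<le> y"
  shows "x \<le> y powr (1/n)"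
proof -
  have "(x powr n) powr (1/n) \<le> y powr (1/n)"
    using assms by (intro powr_mono2) auto
  then show ?thesis
    using assms by (simp add: powr_powr)
qed

lemma powr_add_le:
  fixes x y e :: real
  assumes "0 \<le> x" "0 \<le> y" "0 \<le> e" "e \<le> 1"
  shows "(x + y) powr e \<le> 2 * (x powr e + y powr e)"
proof -
  have "(x + y) powr e \<le> (2 * max x y) powr e"
    using assms by (intro powr_mono2) auto
  also have "\<dots> = 2 powr e * max x y powr e"
    using assms by (simp add: powr_mult)
  also have "\<dots> \<le> 2 * max x y powr e"
    using powr_le_self[of 2 e] assms by (simp add: mult_right_mono)
  also have "max x y powr e \<le> x powr e + y powr e"
    by (simp add: max_def)
  finally show ?thesis by simp
qed

definition vertical_gauge :: "real \<Rightarrow> real \<Rightarrow> real \<Rightarrow> real" where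
  "vertical_gauge m r v =
     (if r = 0 then \<bar>v\<bar> powr (1/(2*m+2)) else min (\<bar>v\<bar> powr (1/(2*m+2))) (sqrt \<bar>v\<bar> / r powr m))"

lemma delta_eq_vertical_gauge:
  "delta m (x, y, t) (\<xi>, \<eta>, \<tau>) = norm ((x, y) - (\<xi>, \<eta>)) +
     vertical_gauge m (norm (x, y)) (\<tau> - t + norm (x, y) powr (2*m) * omega (x, y) (\<xi>, \<eta>))"
  by (simp add: delta_def zabs_eq_norm vertical_gauge_def Let_def)

lemma vertical_gauge_nonneg: "0 \<le> vertical_gauge m r v"
  by (simp add: vertical_gauge_def)

lemma vertical_gauge_le_root: "vertical_gauge m r v \<le> \<bar>v\<bar> powr (1/(2*m+2))"
  by (simp add: vertical_gauge_def)

lemma vertical_gauge_le_sqrt_div: "r \<noteq> 0 \<Longrightarrow> vertical_gauge m r v \<le> sqrt \<bar>v\<bar> / r powr m"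
  by (simp add: vertical_gauge_def)

lemma sqrt_div_powr_eq:
  assumes "0 \<le> m" "0 < r"
  shows "sqrt \<bar>v\<bar> / r powr m = \<bar>v\<bar> powr (1/(2*m+2)) * (\<bar>v\<bar> powr (1/(2*m+2)) / r) powr m"
proof -
  define A where "A = \<bar>v\<bar> powr (1/(2*m+2))"
  have "A powr (m+1) = \<bar>v\<bar> powr ((1/(2*m+2)) * (m+1))"
    by (simp add: A_def powr_powr)
  also have "(1/(2*m+2)) * (m+1) = 1/2"
    using assms by (simp add: field_simps)
  finally have "sqrt \<bar>v\<bar> = A powr (m+1)"
    by (simp add: powr_half_sqrt)
  also have "\<dots> = A * A powr m"
    by (simp add: powr_add A_def)
  finally show ?thesis
    using assms by (simp add: A_def powr_divide)
qed

lemma sqrt_div_powr_le_root: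
  assumes "0 \<le> m" "0 < r" "\<bar>v\<bar> powr (1/(2*m+2)) \<le> r"
  shows "sqrt \<bar>v\<bar> / r powr m \<le> \<bar>v\<bar> powr (1/(2*m+2))"
proof -
  have "(\<bar>v\<bar> powr (1/(2*m+2)) / r) powr m \<le> 1"
    using assms by (intro powr_le1) auto
  then show ?thesis
    unfolding sqrt_div_powr_eq[OF assms(1,2)] by (simp add: mult_left_le)
qed

lemma root_le_sqrt_div_powr:
  assumes "0 \<le> m" "0 < r" "r \<le> \<bar>v\<bar> powr (1/(2*m+2))"
  shows "\<bar>v\<bar> powr (1/(2*m+2)) \<le> sqrt \<bar>v\<bar> / r powr m"
proof -
  have "1 \<le> (\<bar>v\<bar> powr (1/(2*m+2)) / r) powr m"
    using assms by (intro ge_one_powr_ge_zero) auto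
  then show ?thesis
    unfolding sqrt_div_powr_eq[OF assms(1,2)] by (simp add: mult_le_cancel_left1)
qed

lemma vertical_gauge_eq_root:
  assumes "0 \<le> m" "0 \<le> r" "r \<le> \<bar>v\<bar> powr (1/(2*m+2))"
  shows "vertical_gauge m r v = \<bar>v\<bar> powr (1/(2*m+2))"
  using root_le_sqrt_div_powr[OF assms(1) _ assms(3)] assms(2)
  by (cases "r = 0") (auto simp: vertical_gauge_def)

lemma vertical_gauge_eq_sqrt_div:
  assumes "0 \<le> m" "0 < r" "\<bar>v\<bar> powr (1/(2*m+2)) \<le> r"
  shows "vertical_gauge m r v = sqrt \<bar>v\<bar> / r powr m"
  using sqrt_div_powr_le_root[OF assms] assms(2) by (simp add: vertical_gauge_def)

lemma root_le_vertical_gauge_add: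
  assumes "0 \<le> m" "0 \<le> r"
  shows "\<bar>v\<bar> powr (1/(2*m+2)) \<le> vertical_gauge m r v + r"
proof (cases "r \<le> \<bar>v\<bar> powr (1/(2*m+2))")
  case True
  then show ?thesis
    using vertical_gauge_eq_root[OF assms True] assms(2) by simp
next
  case False
  then show ?thesis
    using vertical_gauge_nonneg[of m r v] by linarith
qed

lemma vertical_gauge_le_of_drift:
  assumes m: "0 \<le> m" and L: "0 \<le> L" and r: "0 \<le> r"
    and v: "\<bar>v\<bar> \<le> vertical_drift_bound m r L"
  shows "vertical_gauge m r v \<le> (2*m+1) * 2 powr (2*m) * L"
proof -
  define c where "c = (2*m+1) * 2 powr (2*m)"
  have c: "1 \<le> c"
    using m ge_one_powr_ge_zero[of 2 "2*m"] mult_mono[of 1 "2*m+1" 1 "2 powr (2*m)"]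
    by (simp add: c_def)
  show ?thesis
  proof (cases "r \<le> L")
    case True
    then have "\<bar>v\<bar> \<le> c * L powr (2*m+2)"
      using v vertical_drift_bound_le_length[of m r L 1] m L r by (simp add: c_def)
    then have "\<bar>v\<bar> powr (1/(2*m+2)) \<le> (c * L powr (2*m+2)) powr (1/(2*m+2))"
      using m by (intro powr_mono2) auto
    also have "\<dots> = c powr (1/(2*m+2)) * L"
      using m L c by (simp add: powr_mult powr_powr)
    also have "\<dots> \<le> c * L"
      using powr_le_self[OF c, of "1/(2*m+2)"] m L by (simp add: mult_right_mono)
    finally show ?thesis
      using vertical_gauge_le_root[of m r v] by (simp add: c_def)
  next
    case False
    then have "\<bar>v\<bar> \<le> c * (r powr m)\<^sup>2 * L\<^sup>2"
      using v vertical_drift_bound_le_radius[of m r L 1] m L r by (simp add: c_def)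
    then have "sqrt \<bar>v\<bar> \<le> sqrt c * r powr m * L"
      using L by (metis real_sqrt_le_mono real_sqrt_mult real_sqrt_abs abs_of_nonneg powr_ge_zero)
    then have "sqrt \<bar>v\<bar> / r powr m \<le> sqrt c * L"
      using False L by (simp add: divide_le_eq mult.commute mult.left_commute)
    also have "\<dots> \<le> c * L"
      using powr_le_self[OF c, of "1/2"] c L by (simp add: powr_half_sqrt mult_right_mono)
    finally show ?thesis
      using vertical_gauge_le_sqrt_div[of r m v] False L by (simp add: c_def)
  qed
qed

lemma vertical_gauge_shift_le_near:
  assumes m: "0 \<le> m" and h: "0 \<le> h" and r: "0 \<le> r" "r \<le> 2 * h"
    and u: "\<bar>u\<bar> \<le> \<bar>v\<bar> + vertical_drift_bound m r h"
  shows "vertical_gauge m \<rho> u \<le> 2 * (2 + (2*m+1) * 3 powr (2*m)) * (h + vertical_gauge m r v)"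
proof -
  define c where "c = (2*m+1) * 3 powr (2*m)"
  define e where "e = 1/(2*m+2)"
  have c: "1 \<le> c"
    using m ge_one_powr_ge_zero[of 3 "2*m"] mult_mono[of 1 "2*m+1" 1 "3 powr (2*m)"]
    by (simp add: c_def)
  have e: "0 \<le> e" "e \<le> 1" "(h powr (2*m+2)) powr e = h"
    using m h by (auto simp: e_def powr_powr)
  have "\<bar>u\<bar> \<le> \<bar>v\<bar> + c * h powr (2*m+2)"
    using u vertical_drift_bound_le_length[of m r h 2] m h r by (simp add: c_def)
  then have "\<bar>u\<bar> powr e \<le> (\<bar>v\<bar> + c * h powr (2*m+2)) powr e"
    using e by (intro powr_mono2) auto
  also have "\<dots> \<le> 2 * (\<bar>v\<bar> powr e + c powr e * h)"
    using powr_add_le[of "\<bar>v\<bar>" "c * h powr (2*m+2)" e] e c by (simp add: powr_mult)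
  also have "\<dots> \<le> 2 * (vertical_gauge m r v + 2 * h + c * h)"
  proof -
    have "c powr e * h \<le> c * h"
      using powr_le_self[OF c e(1,2)] h by (rule mult_right_mono)
    then show ?thesis
      using root_le_vertical_gauge_add[OF m r(1), of v] r by (simp add: e_def)
  qed
  also have "\<dots> \<le> 2 * (2 + c) * (h + vertical_gauge m r v)"
    using c h vertical_gauge_nonneg[of m r v] by (simp add: algebra_simps)
  finally show ?thesis
    using vertical_gauge_le_root[of m \<rho> u] by (simp add: c_def e_def)
qed

lemma powr_sq_mult_sq_le_abs:
  fixes m h r v :: real
  assumes m: "0 \<le> m" and h: "0 \<le> h" "h \<le> r" and r: "r \<le> \<bar>v\<bar> powr (1/(2*m+2))"
  shows "(r powr m)\<^sup>2 * h\<^sup>2 \<le> \<bar>v\<bar>"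
proof -
  have r0: "0 \<le> r"
    using h by linarith
  have "(r powr m)\<^sup>2 * h\<^sup>2 \<le> (r powr m)\<^sup>2 * r\<^sup>2"
    using h by (intro mult_left_mono power_mono) auto
  also have "\<dots> = (r powr m) powr 2 * r powr 2"
    using r0 by (simp add: powr_realpow)
  also have "\<dots> = r powr (2*m+2)"
    by (simp add: powr_powr powr_add mult.commute)
  also have "\<dots> \<le> (\<bar>v\<bar> powr (1/(2*m+2))) powr (2*m+2)"
    using r r0 m by (intro powr_mono2) auto
  also have "\<dots> = \<bar>v\<bar>"
    using m by (simp add: powr_powr)
  finally show ?thesis .
qed

lemma vertical_gauge_le_sqrt_div_shift:
  assumes m: "0 \<le> m" and h: "0 \<le> h" and c: "1 \<le> c" and r0: "0 < r" "r / 2 \<le> \<rho>"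
    and ur: "\<bar>u\<bar> \<le> \<bar>v\<bar> + c * (r powr m)\<^sup>2 * h\<^sup>2"
  shows "vertical_gauge m \<rho> u \<le> 2 powr m * (sqrt \<bar>v\<bar> / r powr m + c * h)"
proof -
  have P: "1 \<le> 2 powr m"
    using m by (intro ge_one_powr_ge_zero) auto
  have "(r / 2) powr m \<le> \<rho> powr m"
    using m r0 by (intro powr_mono2) auto
  then have "r powr m / 2 powr m \<le> \<rho> powr m"
    using r0 by (simp add: powr_divide)
  moreover have "0 < \<rho> powr m * (r powr m / 2 powr m)"
    using r0 by simp
  ultimately have "sqrt \<bar>u\<bar> / \<rho> powr m \<le> sqrt \<bar>u\<bar> / (r powr m / 2 powr m)"
    by (intro divide_left_mono) auto
  then have "vertical_gauge m \<rho> u \<le> 2 powr m * (sqrt \<bar>u\<bar> / r powr m)"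
    using vertical_gauge_le_sqrt_div[of \<rho> m u] r0 by (simp add: mult.commute)
  moreover have "sqrt \<bar>u\<bar> \<le> sqrt \<bar>v\<bar> + sqrt c * r powr m * h"
    using ur c h sqrt_add_le_add_sqrt[of "\<bar>v\<bar>" "c * (r powr m)\<^sup>2 * h\<^sup>2"]
    by (smt (verit) real_sqrt_le_mono real_sqrt_mult real_sqrt_abs abs_of_nonneg powr_ge_zero
        mult_nonneg_nonneg zero_le_power2)
  then have "sqrt \<bar>u\<bar> / r powr m \<le> sqrt \<bar>v\<bar> / r powr m + sqrt c * h"
    using r0 by (simp add: divide_le_eq algebra_simps)
  moreover have "sqrt c * h \<le> c * h"
    using powr_le_self[OF c, of "1/2"] c h by (simp add: powr_half_sqrt mult_right_mono)
  ultimately show ?thesis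
    using P by (smt (verit) mult_left_mono)
qed

lemma vertical_gauge_shift_le_far:
  assumes m: "0 \<le> m" and h: "0 \<le> h" and r: "2 * h < r" "r \<le> \<rho> + h"
    and u: "\<bar>u\<bar> \<le> \<bar>v\<bar> + vertical_drift_bound m r h"
  shows "vertical_gauge m \<rho> u \<le> 2 powr m * (2 + (2*m+1) * 3 powr (2*m)) * (h + vertical_gauge m r v)"
proof -
  define c where "c = (2*m+1) * 3 powr (2*m)"
  define A where "A = \<bar>v\<bar> powr (1/(2*m+2))"
  have c: "1 \<le> c"
    using m ge_one_powr_ge_zero[of 3 "2*m"] mult_mono[of 1 "2*m+1" 1 "3 powr (2*m)"]
    by (simp add: c_def)
  have P: "1 \<le> 2 powr m"
    using m by (intro ge_one_powr_ge_zero) auto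
  have r0: "0 < r" "r / 2 \<le> \<rho>"
    using r h by auto
  have ur: "\<bar>u\<bar> \<le> \<bar>v\<bar> + c * (r powr m)\<^sup>2 * h\<^sup>2"
    using u vertical_drift_bound_le_radius[of m r h 2] m h r by (simp add: c_def)
  have via_sqrt: "vertical_gauge m \<rho> u \<le> 2 powr m * (sqrt \<bar>v\<bar> / r powr m + c * h)"
    by (rule vertical_gauge_le_sqrt_div_shift[OF m h c r0 ur])
  show ?thesis
  proof (cases "A \<le> r")
    case True
    then have "vertical_gauge m r v = sqrt \<bar>v\<bar> / r powr m"
      using vertical_gauge_eq_sqrt_div[OF m r0(1)] by (simp add: A_def)
    moreover have "vertical_gauge m r v + c * h \<le> (2 + c) * (h + vertical_gauge m r v)"
      using c h vertical_gauge_nonneg[of m r v] by (simp add: algebra_simps)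
    ultimately show ?thesis
      using via_sqrt P by (simp add: c_def) (smt (verit) mult_left_mono mult.assoc)
  next
    case False
    then have gauge: "vertical_gauge m r v = A"
      using vertical_gauge_eq_root[OF m] r0 by (simp add: A_def)
    have "(r powr m)\<^sup>2 * h\<^sup>2 \<le> \<bar>v\<bar>"
      using powr_sq_mult_sq_le_abs[OF m h, of r v] False r h by (simp add: A_def)
    then have "c * ((r powr m)\<^sup>2 * h\<^sup>2) \<le> c * \<bar>v\<bar>"
      using c by (intro mult_left_mono) auto
    then have "\<bar>u\<bar> \<le> (1 + c) * \<bar>v\<bar>"
      using ur by (simp add: algebra_simps)
    then have "\<bar>u\<bar> powr (1/(2*m+2)) \<le> (1 + c) powr (1/(2*m+2)) * A"
      using powr_mono2[of "1/(2*m+2)" "\<bar>u\<bar>" "(1 + c) * \<bar>v\<bar>"] m c by (simp add: powr_mult A_def)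
    also have "\<dots> \<le> (1 + c) * A"
      using powr_le_self[of "1 + c" "1/(2*m+2)"] c m by (simp add: A_def mult_right_mono)
    also have "\<dots> \<le> (2 + c) * (h + A)"
      using c h by (simp add: A_def algebra_simps)
    also have "\<dots> \<le> 2 powr m * (2 + c) * (h + A)"
      using P c h mult_right_mono[OF P, of "(2 + c) * (h + A)"] by (simp add: A_def mult.assoc)
    finally show ?thesis
      using vertical_gauge_le_root[of m \<rho> u] gauge by (simp add: c_def A_def)
  qed
qed

lemma vertical_gauge_shift_le:
  assumes m: "0 \<le> m" and h: "0 \<le> h" and r: "0 \<le> r" "r \<le> \<rho> + h"
    and u: "\<bar>u\<bar> \<le> \<bar>v\<bar> + vertical_drift_bound m r h"
  shows "vertical_gauge m \<rho> u \<le> 2 * 2 powr m * (2 + (2*m+1) * 3 powr (2*m)) * (h + vertical_gauge m r v)"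
proof -
  define K where "K = (2 + (2*m+1) * 3 powr (2*m)) * (h + vertical_gauge m r v)"
  have "0 \<le> K" "1 \<le> 2 powr m"
    using m h vertical_gauge_nonneg[of m r v] by (auto simp: K_def intro: ge_one_powr_ge_zero)
  then have "2 * K \<le> 2 * 2 powr m * K" "2 powr m * K \<le> 2 * 2 powr m * K"
    by (simp_all add: mult_right_mono)
  moreover have "vertical_gauge m \<rho> u \<le> 2 * K \<or> vertical_gauge m \<rho> u \<le> 2 powr m * K"
  proof (cases "r \<le> 2 * h")
    case True
    then show ?thesis
      using vertical_gauge_shift_le_near[OF m h r(1) True u, of \<rho>] unfolding K_def mult.assoc by blast
  next
    case False
    then show ?thesis
      using vertical_gauge_shift_le_far[OF m h _ r(2) u] unfolding K_def mult.assoc by simp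
  qed
  ultimately show ?thesis
    unfolding K_def mult.assoc by linarith
qed

lemma sqrt_div_powr_le_root_mult:
  assumes m: "0 \<le> m" and N: "0 < N" and U: "0 < U" "U \<le> 2 * pi * N powr (2*m+2)"
  shows "sqrt U / N powr m \<le> 8 * U powr (1/(2*m+2))"
proof -
  define A where "A = U powr (1/(2*m+2))"
  have "U powr (m/(2*m+2)) \<le> (2 * pi * N powr (2*m+2)) powr (m/(2*m+2))"
    using U m by (intro powr_mono2) auto
  also have "\<dots> = (2*pi) powr (m/(2*m+2)) * N powr m"
    using m N by (simp add: powr_mult powr_powr)
  also have "(2*pi) powr (m/(2*m+2)) \<le> 8"
    using powr_le_self[of "2*pi" "m/(2*m+2)"] pi_gt3 pi_less_4 m by (simp add: field_simps)
  finally have "U powr (1/(2*m+2)) * U powr (m/(2*m+2)) \<le> A * (8 * N powr m)"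
    using N by (simp add: A_def mult_left_mono)
  moreover have "U powr (1/(2*m+2)) * U powr (m/(2*m+2)) = sqrt U"
  proof -
    have e: "1/(2*m+2) + m/(2*m+2) = 1/2"
      using m by (simp add: field_simps)
    have "U powr (1/(2*m+2)) * U powr (m/(2*m+2)) = U powr (1/2)"
      by (simp only: e flip: powr_add)
    then show ?thesis
      using U by (simp add: powr_half_sqrt)
  qed
  ultimately show ?thesis
    using N by (simp add: A_def divide_le_eq algebra_simps)
qed

section \<open>Explicit horizontal curves\<close>

definition vertical_speed ::
  "real \<Rightarrow> (real \<Rightarrow> real \<times> real) \<Rightarrow> (real \<Rightarrow> real \<times> real) \<Rightarrow> real \<Rightarrow> real" where
  "vertical_speed m P P' r = norm (P r) powr (2*m) * omega (P' r) (P r)"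

lemma horizontally_joinable_lift:
  fixes P P' :: "real \<Rightarrow> real \<times> real"
  assumes der: "\<And>s. (P has_vector_derivative P' s) (at s)" and cont: "continuous_on {0..1} P'"
    and m: "m > 0"
  shows "horizontally_joinable m (fst (P 0), snd (P 0), t)
           (fst (P 1), snd (P 1), t + integral {0..1} (vertical_speed m P P'))
           (integral {0..1} (\<lambda>r. norm (P' r)))"
proof -
  define \<gamma> where "\<gamma> s = (fst (P s), snd (P s), t + integral {0..s} (vertical_speed m P P'))" for s
  have cP: "continuous_on UNIV P"
    by (intro continuous_at_imp_continuous_on ballI has_vector_derivative_continuous[OF der])
  have cV: "continuous_on {0..1} (vertical_speed m P P')"
    unfolding vertical_speed_def omega_def
    by (intro continuous_intros continuous_on_powr' continuous_on_subset[OF cP] cont) (use m in auto)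
  have "horizontal m \<gamma> (\<lambda>r. fst (P' r)) (\<lambda>r. snd (P' r))"
    unfolding horizontal_def
  proof (intro conjI ballI)
    show "(\<lambda>r. fst (P' r)) absolutely_integrable_on {0..1}"
      "(\<lambda>r. snd (P' r)) absolutely_integrable_on {0..1}"
      by (intro absolutely_integrable_continuous_real continuous_intros cont)+
    fix s :: real
    assume s: "s \<in> {0..1}"
    have "(P' has_integral (P s - P 0)) {0..s}"
      using s by (intro fundamental_theorem_of_calculus) (auto intro: has_vector_derivative_at_within der)
    moreover have "(vertical_speed m P P' has_integral integral {0..s} (vertical_speed m P P')) {0..s}"
      using s by (intro integrable_integral integrable_continuous_real continuous_on_subset[OF cV]) auto
    ultimately have "((\<lambda>r. (fst (P' r), snd (P' r), vertical_speed m P P' r)) has_integral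
          (fst (P s - P 0), snd (P s - P 0), integral {0..s} (vertical_speed m P P'))) {0..s}"
      by (intro has_integral_Pair has_integral_fst has_integral_snd)
    then show "((\<lambda>r. hfield m (fst (P' r)) (snd (P' r)) (\<gamma> r)) has_integral \<gamma> s - \<gamma> 0) {0..s}"
      by (simp add: \<gamma>_def hfield_eq vertical_speed_def)
  qed
  moreover have "hlength (\<lambda>r. fst (P' r)) (\<lambda>r. snd (P' r)) = integral {0..1} (\<lambda>r. norm (P' r))"
    unfolding hlength_def by (simp add: norm_prod_def)
  ultimately show ?thesis
    unfolding horizontally_joinable_def
    by (intro exI[of _ \<gamma>] exI[of _ "\<lambda>r. fst (P' r)"] exI[of _ "\<lambda>r. snd (P' r)"]) (simp add: \<gamma>_def)
qed

lemma horizontally_joinable_segment: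
  assumes "m > 0"
  shows "horizontally_joinable m (fst w, snd w, t)
           (fst w', snd w', t - integral {0..1} (\<lambda>r. norm (w + r *\<^sub>R (w' - w)) powr (2*m)) * omega w w')
           (norm (w' - w))"
proof -
  have "((\<lambda>s. w + s *\<^sub>R (w' - w)) has_vector_derivative (w' - w)) (at s)" for s
    by (auto intro!: derivative_eq_intros)
  from horizontally_joinable_lift[OF this _ assms, of t]
  have "horizontally_joinable m (fst w, snd w, t)
          (fst w', snd w', t + integral {0..1} (vertical_speed m (\<lambda>s. w + s *\<^sub>R (w' - w)) (\<lambda>s. w' - w)))
          (norm (w' - w))"
    by simp
  moreover have "vertical_speed m (\<lambda>s. w + s *\<^sub>R (w' - w)) (\<lambda>s. w' - w)
      = (\<lambda>r. norm (w + r *\<^sub>R (w' - w)) powr (2*m) * (- omega w w'))"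
    by (rule ext) (simp add: vertical_speed_def omega_def algebra_simps)
  ultimately show ?thesis
    by (simp only: integral_mult_left) simp
qed

lemma horizontally_joinable_segment_parallel:
  assumes "m > 0" "omega w w' = 0"
  shows "horizontally_joinable m (fst w, snd w, t) (fst w', snd w', t) (norm (w' - w))"
  using horizontally_joinable_segment[OF assms(1), of w t w'] assms(2) by simp

definition rotate_plane :: "real \<Rightarrow> real \<times> real \<Rightarrow> real \<times> real" where
  "rotate_plane \<theta> w = (cos \<theta> * fst w - sin \<theta> * snd w, sin \<theta> * fst w + cos \<theta> * snd w)"

lemma norm_rotate_plane [simp]: "norm (rotate_plane \<theta> w) = norm w"
proof -
  have "(cos \<theta> * fst w - sin \<theta> * snd w)\<^sup>2 + (sin \<theta> * fst w + cos \<theta> * snd w)\<^sup>2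
        = ((sin \<theta>)\<^sup>2 + (cos \<theta>)\<^sup>2) * ((fst w)\<^sup>2 + (snd w)\<^sup>2)"
    by algebra
  then show ?thesis
    unfolding rotate_plane_def norm_prod_def by simp
qed

lemma rotate_plane_scaleR: "rotate_plane \<theta> (c *\<^sub>R w) = c *\<^sub>R rotate_plane \<theta> w"
  by (simp add: rotate_plane_def algebra_simps)

lemma rotate_plane_minus_cancel [simp]: "rotate_plane (- \<theta>) (rotate_plane \<theta> w) = w"
proof -
  have "cos \<theta> * (cos \<theta> * fst w - sin \<theta> * snd w) + sin \<theta> * (sin \<theta> * fst w + cos \<theta> * snd w)
          = ((sin \<theta>)\<^sup>2 + (cos \<theta>)\<^sup>2) * fst w"
    "- (sin \<theta> * (cos \<theta> * fst w - sin \<theta> * snd w)) + cos \<theta> * (sin \<theta> * fst w + cos \<theta> * snd w)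
          = ((sin \<theta>)\<^sup>2 + (cos \<theta>)\<^sup>2) * snd w"
    by algebra+
  then show ?thesis
    by (simp add: rotate_plane_def prod_eq_iff)
qed

lemma has_vector_derivative_rotate_plane:
  "((\<lambda>s. rotate_plane (\<theta> * s) w) has_vector_derivative
     \<theta> *\<^sub>R (- snd (rotate_plane (\<theta> * s) w), fst (rotate_plane (\<theta> * s) w))) (at s)"
proof -
  have "((\<lambda>x. cos (\<theta> * x) * fst w - sin (\<theta> * x) * snd w) has_real_derivative
     (- \<theta> * (sin (\<theta> * s) * fst w + cos (\<theta> * s) * snd w))) (at s)"
    "((\<lambda>x. sin (\<theta> * x) * fst w + cos (\<theta> * x) * snd w) has_real_derivative
     (\<theta> * (cos (\<theta> * s) * fst w - sin (\<theta> * s) * snd w))) (at s)"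
    by (auto intro!: derivative_eq_intros simp: algebra_simps)
  then show ?thesis
    unfolding rotate_plane_def has_real_derivative_iff_has_vector_derivative
    using has_vector_derivative_Pair by (fastforce simp: algebra_simps)
qed

lemma horizontally_joinable_arc:
  assumes m: "m > 0"
  shows "horizontally_joinable m (fst w, snd w, t)
           (fst (rotate_plane \<theta> w), snd (rotate_plane \<theta> w), t - \<theta> * norm w powr (2*m+2))
           (\<bar>\<theta>\<bar> * norm w)"
proof -
  define P where "P s = rotate_plane (\<theta> * s) w" for s
  define P' where "P' s = \<theta> *\<^sub>R (- snd (P s), fst (P s))" for s
  have der: "(P has_vector_derivative P' s) (at s)" for s
    unfolding P_def[abs_def] P'_def P_def by (rule has_vector_derivative_rotate_plane)
  have "continuous_on {0..1} P'"
    unfolding P'_def P_def rotate_plane_def by (intro continuous_intros)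
  from horizontally_joinable_lift[OF der this m, of t]
  have "horizontally_joinable m (fst w, snd w, t)
          (fst (rotate_plane \<theta> w), snd (rotate_plane \<theta> w), t + integral {0..1} (vertical_speed m P P'))
          (integral {0..1} (\<lambda>r. norm (P' r)))"
    by (simp add: P_def rotate_plane_def)
  moreover have "vertical_speed m P P' = (\<lambda>s. - \<theta> * norm w powr (2*m+2))"
  proof (rule ext)
    fix s
    have nP: "norm (P s) = norm w"
      by (simp add: P_def)
    then have sq: "(fst (P s))\<^sup>2 + (snd (P s))\<^sup>2 = (norm w)\<^sup>2"
      by (simp add: norm_prod_def)
    have "vertical_speed m P P' s = norm w powr (2*m) * (- \<theta> * ((fst (P s))\<^sup>2 + (snd (P s))\<^sup>2))"
      unfolding vertical_speed_def nP by (simp add: P'_def omega_def algebra_simps power2_eq_square)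
    also have "\<dots> = - \<theta> * (norm w powr (2*m) * norm w powr 2)"
      unfolding sq by simp
    finally show "vertical_speed m P P' s = - \<theta> * norm w powr (2*m+2)"
      by (simp add: powr_add)
  qed
  moreover have "norm (P' s) = \<bar>\<theta>\<bar> * norm w" for s
  proof -
    have "norm (- snd (P s), fst (P s)) = norm (P s)"
      by (simp add: norm_Pair norm_prod_def add.commute)
    then show ?thesis
      unfolding P'_def norm_scaleR by (simp add: P_def)
  qed
  ultimately show ?thesis
    by simp
qed

lemma horizontally_joinable_vertical_circle:
  fixes w :: "real \<times> real"
  assumes m: "0 < m" and U: "0 < U" "2 * pi * norm w powr (2*m+2) \<le> U" and \<sigma>: "\<bar>\<sigma>\<bar> = 1"
  shows "horizontally_joinable m (fst w, snd w, t) (fst w, snd w, t - \<sigma> * U) (12 * U powr (1/(2*m+2)))"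
proof -
  define n where "n = 2*m+2"
  define R where "R = (U / (2*pi)) powr (1/n)"
  define W where "W = (if w = 0 then (R, 0) else (R / norm w) *\<^sub>R w)"
  have n: "0 < n" using m by (simp add: n_def)
  have R: "0 < R" "R powr n = U / (2*pi)"
    using U n by (simp_all add: R_def powr_powr)
  have nW: "norm W = R"
    using R by (simp add: W_def)
  have "norm w powr n \<le> U / (2*pi)"
    using U by (simp add: n_def field_simps)
  then have wR: "norm w \<le> R"
    unfolding R_def using n by (intro le_root_of_powr_le) auto
  have \<omega>: "omega w W = 0" "omega W w = 0"
    by (auto simp: W_def omega_def)
  have dist: "norm (W - w) \<le> 2 * R" "norm (w - W) \<le> 2 * R"
    using norm_triangle_ineq4[of W w] norm_triangle_ineq4[of w W] nW wR by auto
  have rot: "rotate_plane (\<sigma> * (2*pi)) W = W"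
  proof -
    have "\<sigma> = 1 \<or> \<sigma> = -1" using \<sigma> by auto
    then show ?thesis by (auto simp: rotate_plane_def)
  qed
  have height: "t - \<sigma> * (2*pi) * norm W powr (2*m+2) = t - \<sigma> * U"
    and len: "\<bar>\<sigma> * (2*pi)\<bar> * norm W = 2 * pi * R"
    using R nW \<sigma> by (simp_all add: n_def abs_mult)
  have around: "horizontally_joinable m (fst W, snd W, t) (fst W, snd W, t - \<sigma> * U) (2 * pi * R)"
    using horizontally_joinable_arc[OF m, of W t "\<sigma> * (2*pi)"] unfolding rot height len .
  have loop: "horizontally_joinable m (fst w, snd w, t) (fst w, snd w, t - \<sigma> * U) (2 * R + 2 * pi * R + 2 * R)"
    using horizontally_joinable_trans[OF horizontally_joinable_trans
          [OF horizontally_joinable_mono[OF horizontally_joinable_segment_parallel[OF m \<omega>(1)] dist(1)] around]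
          horizontally_joinable_mono[OF horizontally_joinable_segment_parallel[OF m \<omega>(2)] dist(2)]] .
  have "R \<le> U powr (1/n)"
    unfolding R_def using U n pi_gt3 by (intro powr_mono2) (auto simp: field_simps)
  moreover have "2 * pi * R \<le> 8 * R"
    using pi_less_4 R by simp
  ultimately have "2 * R + 2 * pi * R + 2 * R \<le> 12 * U powr (1/(2*m+2))"
    unfolding n_def by linarith
  then show ?thesis
    by (rule horizontally_joinable_mono[OF loop])
qed

lemma horizontally_joinable_sector:
  fixes w :: "real \<times> real"
  assumes m: "0 < m" and \<epsilon>: "0 \<le> \<epsilon>"
  shows "horizontally_joinable m (fst w, snd w, t)
           (fst w, snd w, t - \<theta> * ((1+\<epsilon>) powr (2*m+2) - 1) * norm w powr (2*m+2))
           (2 * \<epsilon> * norm w + \<bar>\<theta>\<bar> * (2 + \<epsilon>) * norm w)"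
proof -
  define N where "N = norm w"
  define n where "n = 2*m+2"
  define w1 where "w1 = (1+\<epsilon>) *\<^sub>R w"
  define w3 where "w3 = rotate_plane \<theta> w"
  define t1 where "t1 = t - \<theta> * ((1+\<epsilon>) * N) powr n"
  have w2: "rotate_plane \<theta> w1 = (1+\<epsilon>) *\<^sub>R w3"
    by (simp add: w3_def w1_def rotate_plane_scaleR)
  have out: "horizontally_joinable m (fst w, snd w, t) (fst w1, snd w1, t) (\<epsilon> * N)"
    using horizontally_joinable_segment_parallel[OF m, of w w1 t] \<epsilon>
    by (simp add: w1_def omega_def N_def algebra_simps)
  have turn: "horizontally_joinable m (fst w1, snd w1, t)
      (fst (rotate_plane \<theta> w1), snd (rotate_plane \<theta> w1), t1) (\<bar>\<theta>\<bar> * ((1+\<epsilon>) * N))"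
    using horizontally_joinable_arc[OF m, of w1 t \<theta>] \<epsilon>
    by (simp add: t1_def n_def N_def w1_def)
  have inward: "horizontally_joinable m
      (fst (rotate_plane \<theta> w1), snd (rotate_plane \<theta> w1), t1) (fst w3, snd w3, t1) (\<epsilon> * N)"
    using horizontally_joinable_segment_parallel[OF m, of "(1+\<epsilon>) *\<^sub>R w3" w3 t1] \<epsilon>
    by (simp add: w2 omega_def w3_def N_def algebra_simps)
  have "horizontally_joinable m (fst w3, snd w3, t1) (fst w, snd w, t1 + \<theta> * N powr n) (\<bar>\<theta>\<bar> * N)"
    using horizontally_joinable_arc[OF m, of w3 t1 "- \<theta>"]
    by (simp add: w3_def N_def n_def)
  moreover have "((1+\<epsilon>) * N) powr n = (1+\<epsilon>) powr n * N powr n"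
    using \<epsilon> by (simp add: N_def powr_mult)
  then have "t1 + \<theta> * N powr n = t - \<theta> * ((1+\<epsilon>) powr n - 1) * N powr n"
    by (simp add: t1_def algebra_simps)
  ultimately have turn_back: "horizontally_joinable m (fst w3, snd w3, t1)
      (fst w, snd w, t - \<theta> * ((1+\<epsilon>) powr n - 1) * N powr n) (\<bar>\<theta>\<bar> * N)"
    by simp
  show ?thesis
    using horizontally_joinable_trans[OF horizontally_joinable_trans[OF horizontally_joinable_trans
          [OF out turn] inward] turn_back]
    by (simp add: N_def n_def algebra_simps)
qed

(* With \<epsilon> = sqrt U / norm w ^ (m+1) and \<theta> = \<epsilon>^2 / ((1+\<epsilon>)^(2m+2) - 1) the sector raises
   the height by exactly U, and \<theta> \<le> \<epsilon> < 3 bounds its length by 7 \<epsilon> norm w. *)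
lemma horizontally_joinable_vertical_sector:
  fixes w :: "real \<times> real"
  assumes m: "0 < m" and N: "0 < norm w" and U: "0 < U" "U < 2 * pi * norm w powr (2*m+2)"
    and \<sigma>: "\<bar>\<sigma>\<bar> = 1"
  shows "horizontally_joinable m (fst w, snd w, t) (fst w, snd w, t - \<sigma> * U) (7 * sqrt U / norm w powr m)"
proof -
  define N where "N = norm w"
  define n where "n = 2*m+2"
  define \<epsilon> where "\<epsilon> = sqrt U / N powr (m+1)"
  define \<theta> where "\<theta> = \<epsilon>\<^sup>2 / ((1+\<epsilon>) powr n - 1)"
  have Np: "0 < N" using N by (simp add: N_def)
  have \<epsilon>: "0 < \<epsilon>" using U Np by (simp add: \<epsilon>_def)
  have \<epsilon>U: "\<epsilon>\<^sup>2 * N powr n = U"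
  proof -
    have "(N powr (m+1))\<^sup>2 = N powr n"
      by (simp add: n_def power2_eq_square flip: powr_add)
    then show ?thesis
      using U Np by (simp add: \<epsilon>_def power_divide)
  qed
  have \<epsilon>3: "\<epsilon> < 3"
  proof -
    have "\<epsilon>\<^sup>2 * N powr n < 2 * pi * N powr n"
      using \<epsilon>U U by (simp add: N_def n_def)
    then have "\<epsilon>\<^sup>2 < 2 * pi"
      using Np by simp
    also have "2 * pi < 3\<^sup>2" using pi_less_4 by simp
    finally show ?thesis by (rule power_less_imp_less_base) simp
  qed
  have grow: "1 + \<epsilon> \<le> (1+\<epsilon>) powr n"
    using powr_mono[of 1 n "1+\<epsilon>"] \<epsilon> m by (simp add: n_def)
  then have \<theta>: "0 < \<theta>" "\<theta> \<le> \<epsilon>"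
    using \<epsilon> by (auto simp: \<theta>_def divide_le_eq power2_eq_square mult_left_mono)
  have "(1+\<epsilon>) powr n - 1 \<noteq> 0"
    using grow \<epsilon> by linarith
  then have "\<sigma> * \<theta> * ((1+\<epsilon>) powr n - 1) * N powr n = \<sigma> * U"
    using \<epsilon>U by (simp add: \<theta>_def)
  moreover have "2 * \<epsilon> * N + \<bar>\<sigma> * \<theta>\<bar> * (2 + \<epsilon>) * N \<le> 7 * sqrt U / N powr m"
  proof -
    have "\<theta> * (2 + \<epsilon>) * N \<le> \<epsilon> * 5 * N"
      using \<theta> \<epsilon> \<epsilon>3 Np by (intro mult_right_mono mult_mono) auto
    moreover have "\<epsilon> * N = sqrt U / N powr m"
      using Np by (simp add: \<epsilon>_def powr_add)
    ultimately show ?thesis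
      using \<sigma> \<theta> by (simp add: abs_mult)
  qed
  ultimately show ?thesis
    using horizontally_joinable_sector[OF m, of \<epsilon> w t "\<sigma> * \<theta>"] \<epsilon>
    by (auto simp: N_def n_def mult.assoc intro: horizontally_joinable_mono)
qed

lemma horizontally_joinable_vertical:
  fixes w :: "real \<times> real"
  assumes m: "0 < m"
  shows "horizontally_joinable m (fst w, snd w, t) (fst w, snd w, t + u) (60 * vertical_gauge m (norm w) u)"
proof (cases "u = 0")
  case True
  then show ?thesis
    using horizontally_joinable_mono[OF horizontally_joinable_refl] vertical_gauge_nonneg by simp
next
  case False
  define U where "U = \<bar>u\<bar>"
  define \<sigma> where "\<sigma> = (if 0 \<le> u then -1 else 1::real)"
  define N where "N = norm w"
  define A where "A = U powr (1/(2*m+2))"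
  have U: "0 < U" using False by (simp add: U_def)
  have \<sigma>: "\<bar>\<sigma>\<bar> = 1" "t - \<sigma> * U = t + u"
    by (simp_all add: \<sigma>_def U_def)
  have m0: "0 \<le> m" using m by simp
  show ?thesis
  proof (cases "2 * pi * N powr (2*m+2) \<le> U")
    case True
    have "N powr (2*m+2) \<le> U"
      using True pi_gt3 mult_right_mono[of 1 "2*pi" "N powr (2*m+2)"] by simp
    then have "N \<le> A"
      unfolding A_def using m by (intro le_root_of_powr_le) (auto simp: N_def)
    then have "vertical_gauge m N u = A"
      using vertical_gauge_eq_root[OF m0] by (simp add: N_def A_def U_def)
    then show ?thesis
      using horizontally_joinable_vertical_circle[OF m U _ \<sigma>(1), of w t] True \<sigma>(2)
      by (auto simp: N_def A_def intro: horizontally_joinable_mono)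
  next
    case False
    then have N: "0 < N"
      using U by (auto simp: N_def)
    have "sqrt U / N powr m \<le> 8 * A"
      using sqrt_div_powr_le_root_mult[OF m0 N U(1)] False unfolding A_def by simp
    moreover have "0 \<le> A"
      by (simp add: A_def)
    ultimately have "7 * (sqrt U / N powr m) \<le> 60 * A"
      by linarith
    moreover have "vertical_gauge m N u = min A (sqrt U / N powr m)"
      using N by (simp add: vertical_gauge_def A_def U_def)
    moreover have "7 * (sqrt U / N powr m) \<le> 60 * (sqrt U / N powr m)"
      using U by (intro mult_right_mono) auto
    ultimately have "7 * sqrt U / N powr m \<le> 60 * vertical_gauge m N u"
      by (simp add: min_def)
    then show ?thesis
      using horizontally_joinable_vertical_sector[OF m _ U _ \<sigma>(1), of w t] False N \<sigma>(2)
      by (simp add: N_def horizontally_joinable_mono)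
  qed
qed

section \<open>Comparison of the two distances\<close>

lemma horizontally_joinable_vertical_drift_le:
  assumes m: "1 \<le> 2 * m" and j: "horizontally_joinable m (x0, y0, t0) (\<xi>, \<eta>, \<tau>) l"
  shows "\<bar>\<tau> - t0 + norm (x0, y0) powr (2*m) * omega (x0, y0) (\<xi>, \<eta>)\<bar>
           \<le> vertical_drift_bound m (norm (x0, y0)) l"
proof -
  obtain \<gamma> a b where h: "horizontal m \<gamma> a b" "\<gamma> 0 = (x0, y0, t0)" "\<gamma> 1 = (\<xi>, \<eta>, \<tau>)" "hlength a b \<le> l"
    using j unfolding horizontally_joinable_def by blast
  show ?thesis
    using horizontal_vertical_drift_le[OF m h(1-3)]
      vertical_drift_bound_mono[of m "norm (x0, y0)" "hlength a b" l] hlength_nonneg[OF h(1)] h(4) m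
    by simp
qed

lemma delta_le_hlength:
  assumes m: "1 \<le> 2 * m" and h: "horizontal m \<gamma> a b" "\<gamma> 0 = p" "\<gamma> 1 = q"
  shows "delta m p q \<le> (1 + (2*m+1) * 2 powr (2*m)) * hlength a b"
proof -
  obtain x y t \<xi> \<eta> \<tau> where pq: "p = (x, y, t)" "q = (\<xi>, \<eta>, \<tau>)"
    by (cases p, cases q) auto
  have "norm ((\<xi>, \<eta>) - (x, y)) \<le> hlength a b"
    using horizontal_planar_displacement_le[OF h(1), of 1] h pq by simp
  then have "norm ((x, y) - (\<xi>, \<eta>)) \<le> hlength a b"
    by (simp only: norm_minus_commute)
  moreover have "vertical_gauge m (norm (x, y)) (\<tau> - t + norm (x, y) powr (2*m) * omega (x, y) (\<xi>, \<eta>))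
      \<le> (2*m+1) * 2 powr (2*m) * hlength a b"
    using horizontal_vertical_drift_le[OF m h(1)] h pq m hlength_nonneg[OF h(1)]
    by (intro vertical_gauge_le_of_drift) auto
  ultimately show ?thesis
    by (simp add: pq delta_eq_vertical_gauge algebra_simps)
qed

lemma horizontally_joinable_delta:
  assumes m: "1 \<le> m"
  shows "horizontally_joinable m p q
           ((1 + 120 * 2 powr m * (2 + (2*m+1) * 3 powr (2*m))) * delta m p q)"
proof -
  define K where "K = 2 * 2 powr m * (2 + (2*m+1) * 3 powr (2*m))"
  obtain x y t \<xi> \<eta> \<tau> where pq: "p = (x, y, t)" "q = (\<xi>, \<eta>, \<tau>)"
    by (cases p, cases q) auto
  define h where "h = norm ((x, y) - (\<xi>, \<eta>))"
  define v where "v = \<tau> - t + norm (x, y) powr (2*m) * omega (x, y) (\<xi>, \<eta>)"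
  define t1 where "t1 = t - integral {0..1} (\<lambda>r. norm ((x, y) + r *\<^sub>R ((\<xi>, \<eta>) - (x, y))) powr (2*m))
                          * omega (x, y) (\<xi>, \<eta>)"
  have "norm ((\<xi>, \<eta>) - (x, y)) = h"
    unfolding h_def by (rule norm_minus_commute)
  then have seg: "horizontally_joinable m (x, y, t) (\<xi>, \<eta>, t1) h"
    using horizontally_joinable_segment[of m "(x, y)" t "(\<xi>, \<eta>)"] m unfolding t1_def by simp
  have "\<bar>\<tau> - t1\<bar> \<le> \<bar>v\<bar> + vertical_drift_bound m (norm (x, y)) h"
    using horizontally_joinable_vertical_drift_le[OF _ seg] m by (simp add: v_def)
  moreover have "norm (x, y) \<le> norm (\<xi>, \<eta>) + h"
    using norm_triangle_ineq[of "(\<xi>, \<eta>)" "(x, y) - (\<xi>, \<eta>)"] by (simp add: h_def)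
  ultimately have "60 * vertical_gauge m (norm (\<xi>, \<eta>)) (\<tau> - t1)
      \<le> 60 * (K * (h + vertical_gauge m (norm (x, y)) v))"
    using m unfolding K_def by (intro mult_left_mono vertical_gauge_shift_le) (auto simp: h_def)
  moreover have "horizontally_joinable m (\<xi>, \<eta>, t1) (\<xi>, \<eta>, \<tau>) (60 * vertical_gauge m (norm (\<xi>, \<eta>)) (\<tau> - t1))"
    using horizontally_joinable_vertical[of m "(\<xi>, \<eta>)" t1 "\<tau> - t1"] m by simp
  ultimately have "horizontally_joinable m p q (h + 60 * (K * (h + vertical_gauge m (norm (x, y)) v)))"
    using horizontally_joinable_trans[OF seg horizontally_joinable_mono] pq by blast
  moreover have "h + 60 * (K * (h + vertical_gauge m (norm (x, y)) v)) \<le> (1 + 60 * K) * delta m p q"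
    using vertical_gauge_nonneg[of m "norm (x, y)" v]
    by (simp add: pq delta_eq_vertical_gauge h_def v_def algebra_simps)
  ultimately have "horizontally_joinable m p q ((1 + 60 * K) * delta m p q)"
    by (rule horizontally_joinable_mono)
  then show ?thesis
    by (simp add: K_def mult.assoc)
qed

lemma delta_nonneg: "0 \<le> delta m p q"
  by (cases p, cases q) (simp add: delta_eq_vertical_gauge vertical_gauge_nonneg add_nonneg_nonneg)

lemma delta_le_cc_dist:
  assumes m: "1 \<le> 2 * m" and j: "horizontally_joinable m p q l"
  shows "delta m p q \<le> (1 + (2*m+1) * 2 powr (2*m)) * cc_dist m p q"
proof -
  define c where "c = 1 + (2*m+1) * 2 powr (2*m)"
  have c: "0 < c"
    using m by (simp add: c_def add_pos_nonneg)
  have "{hlength a b | \<gamma> a b. horizontal m \<gamma> a b \<and> \<gamma> 0 = p \<and> \<gamma> 1 = q} \<noteq> {}"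
    using j unfolding horizontally_joinable_def by blast
  moreover have "delta m p q / c \<le> hlength a b" if "horizontal m \<gamma> a b" "\<gamma> 0 = p" "\<gamma> 1 = q" for \<gamma> a b
    using delta_le_hlength[OF m that] c by (simp add: c_def divide_le_eq mult.commute)
  ultimately have "delta m p q / c \<le> cc_dist m p q"
    unfolding cc_dist_def by (intro cInf_greatest) auto
  then show ?thesis
    using c by (simp add: c_def divide_le_eq mult.commute)
qed

theorem theorem1p3:
  fixes m :: real
  assumes "m \<ge> 1"
  shows "\<exists>C>1. \<forall>p q. delta m p q / C \<le> cc_dist m p q \<and> cc_dist m p q \<le> C * delta m p q"
proof -
  define c\<^sub>1 where "c\<^sub>1 = 1 + 120 * 2 powr m * (2 + (2*m+1) * 3 powr (2*m))"
  define c\<^sub>2 where "c\<^sub>2 = 1 + (2*m+1) * 2 powr (2*m)"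
  have c: "1 \<le> c\<^sub>1" "1 \<le> c\<^sub>2"
    using assms by (simp_all add: c\<^sub>1_def c\<^sub>2_def)
  have "delta m p q / (c\<^sub>1 + c\<^sub>2) \<le> cc_dist m p q \<and> cc_dist m p q \<le> (c\<^sub>1 + c\<^sub>2) * delta m p q" for p q
  proof -
    have upper: "cc_dist m p q \<le> c\<^sub>1 * delta m p q"
      using cc_dist_le_if_joinable[OF horizontally_joinable_delta[OF assms]] by (simp add: c\<^sub>1_def)
    have lower: "delta m p q \<le> c\<^sub>2 * cc_dist m p q"
      using delta_le_cc_dist[OF _ horizontally_joinable_delta[OF assms]] assms by (simp add: c\<^sub>2_def)
    have "0 \<le> c\<^sub>2 * cc_dist m p q"
      using lower delta_nonneg[of m p q] by linarith
    then have "0 \<le> cc_dist m p q"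
      using c by (simp add: zero_le_mult_iff)
    then have "delta m p q \<le> (c\<^sub>1 + c\<^sub>2) * cc_dist m p q"
      using lower c mult_right_mono[of c\<^sub>2 "c\<^sub>1 + c\<^sub>2" "cc_dist m p q"] by linarith
    moreover have "cc_dist m p q \<le> (c\<^sub>1 + c\<^sub>2) * delta m p q"
      using upper c mult_right_mono[OF _ delta_nonneg, of c\<^sub>1 "c\<^sub>1 + c\<^sub>2" m p q] by linarith
    ultimately show ?thesis
      using c by (simp add: divide_le_eq mult.commute)
  qed
  moreover have "1 < c\<^sub>1 + c\<^sub>2"
    using c by simp
  ultimately show ?thesis
    by blast
qed

end
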